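(* Let $p,g\in\mathbb{Q}[x]$ with $p$ irreducible in $\mathbb{Q}[x]$ and $p\nmid g$. Suppose there exist $N\in\mathbb{N}$, $\overline h_1,\dots,\overline h_N\in\mathbb{Q}[x]$ with $\deg\overline h_i<\deg p$, and $\omega_1,\dots,\omega_N\in\mathbb{Q}_{>0}$ such that $g\equiv\sum_{i=1}^N\omega_i\overline h_i^2\pmod p$. Then for every integer $e\ge1$ there exist $h_1,\dots,h_N\in\mathbb{Q}[x]$ with $\deg h_i<e\deg p$ such that $g\equiv\sum_{i=1}^N\omega_ih_i^2\pmod{p^e}$. *)

theory Defs
  imports "HOL-Computational_Algebra.Polynomial_Factorial"
begin

end

theory Submission
  imports Defs "HOL-Computational_Algebra.Field_as_Ring"
begin

text \<open>Since \<open>g\<close> is invertible modulo \<open>p\<close>, a congruence \<open>g \<equiv> S (mod p\<^sup>e)\<close> with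
  \<open>S = \<Sum>\<omega>\<^sub>i h\<^sub>i\<^sup>2\<close> lifts to modulus \<open>p\<^sup>e\<^sup>+\<^sup>1\<close> by rescaling all \<open>h\<^sub>i\<close> by the same factor
  \<open>w = 1 + p\<^sup>e t\<close>, Newton-style: \<open>S w\<^sup>2 \<equiv> S + 2 p\<^sup>e t S\<close>, and \<open>t = u r / 2\<close> with
  \<open>u g \<equiv> 1 (mod p)\<close> cancels the error \<open>g - S = p\<^sup>e r\<close> to first order. Reducing the
  \<open>h\<^sub>i\<close> modulo \<open>p\<^sup>e\<close> finally gives the degree bound.\<close>

lemma irreducible_not_dvd_imp_inverse_mod:
  fixes p g :: "'a::euclidean_ring_gcd"
  assumes "irreducible p" and "\<not> p dvd g"
  shows "\<exists>u. p dvd u * g - 1"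
proof -
  have "coprime p g"
    using irreducible_imp_prime_elem[OF assms(1)] assms(2) by (rule prime_elem_imp_coprime)
  then have "fst (bezout_coefficients g p) * g + snd (bezout_coefficients g p) * p = 1"
    by (simp add: bezout_coefficients_fst_snd coprime_commute)
  then have "p dvd fst (bezout_coefficients g p) * g - 1"
    by (metis add_diff_cancel_left' dvd_minus_iff dvd_triv_right minus_diff_eq)
  then show ?thesis ..
qed

lemma rescaled_square_error:
  fixes S c r t k :: "'a::comm_ring_1"
  assumes "2 * k = 1"
  shows "(S + c * r) - S * (1 + c * (k * t)) ^ 2 = c * (r - t * S) - c ^ 2 * (k * t) ^ 2 * S"
proof -
  have "(1 + c * (k * t)) ^ 2 = 1 + c * t * (2 * k) + c ^ 2 * (k * t) ^ 2"
    by (simp add: power2_eq_square algebra_simps)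
  also have "\<dots> = 1 + c * t + c ^ 2 * (k * t) ^ 2"
    using assms by simp
  finally show ?thesis by (simp add: algebra_simps)
qed

lemma square_rescaling_lifts_congruence:
  fixes p c u g S :: "'a::comm_ring_1"
  assumes "(2::'a) dvd 1" and "p dvd u * g - 1" and "p dvd c" and "c dvd g - S"
  shows "\<exists>w. c * p dvd g - S * w ^ 2"
proof -
  obtain k :: 'a where k: "2 * k = 1" using assms(1) by (metis dvdE)
  obtain r where r: "g = S + c * r" using assms(4) by (metis dvdE diff_add_cancel add.commute)
  have "g - S * (1 + c * (k * (u * r))) ^ 2 = c * (r * (1 - u * S) - c * (k * u * r) ^ 2 * S)"
    using rescaled_square_error[OF k, of S c r "u * r"] r by (simp add: algebra_simps power2_eq_square)
  moreover have "p dvd 1 - u * S"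
  proof -
    have "1 - u * S = u * c * r - (u * g - 1)" using r by (simp add: algebra_simps)
    moreover have "p dvd u * c * r - (u * g - 1)"
      using assms(2,3) by (meson dvd_diff dvd_mult dvd_mult2)
    ultimately show ?thesis by (simp only:)
  qed
  then have "p dvd r * (1 - u * S) - c * (k * u * r) ^ 2 * S"
    using assms(3) by (meson dvd_diff dvd_mult dvd_mult2)
  ultimately show ?thesis by (metis mult_dvd_mono dvd_refl)
qed

lemma weighted_squares_congruence_lifts:
  fixes p g :: "'a::comm_ring_1" and a :: "'b \<Rightarrow> 'a"
  assumes "(2::'a) dvd 1" and "p dvd u * g - 1"
    and "p dvd g - (\<Sum>i\<in>I. a i * h i ^ 2)" and "e \<ge> 1"
  shows "\<exists>h. p ^ e dvd g - (\<Sum>i\<in>I. a i * h i ^ 2)"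
  using \<open>e \<ge> 1\<close>
proof (induction e rule: nat_induct_at_least)
  case base
  then show ?case using assms(3) by auto
next
  case (Suc e)
  then obtain h where "p ^ e dvd g - (\<Sum>i\<in>I. a i * h i ^ 2)" by blast
  moreover have "p dvd p ^ e" using Suc.hyps by (simp add: dvd_power)
  ultimately obtain w where "p ^ e * p dvd g - (\<Sum>i\<in>I. a i * h i ^ 2) * w ^ 2"
    using square_rescaling_lifts_congruence[OF assms(1,2)] by blast
  moreover have "(\<Sum>i\<in>I. a i * h i ^ 2) * w ^ 2 = (\<Sum>i\<in>I. a i * (h i * w) ^ 2)"
    by (simp add: sum_distrib_right power_mult_distrib mult.assoc)
  ultimately show ?case by (metis power_Suc2)
qed

lemma weighted_squares_congruence_mod:
  fixes q g :: "'a::euclidean_ring_cancel" and a :: "'b \<Rightarrow> 'a"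
  assumes "q dvd g - (\<Sum>i\<in>I. a i * h i ^ 2)"
  shows "q dvd g - (\<Sum>i\<in>I. a i * (h i mod q) ^ 2)"
proof -
  have "q dvd a i * h i ^ 2 - a i * (h i mod q) ^ 2" for i
  proof -
    have "(a i * h i ^ 2) mod q = (a i * (h i mod q) ^ 2) mod q"
      by (metis mod_mult_right_eq power_mod)
    then show ?thesis by (simp add: mod_eq_dvd_iff)
  qed
  then have "q dvd (\<Sum>i\<in>I. a i * h i ^ 2) - (\<Sum>i\<in>I. a i * (h i mod q) ^ 2)"
    by (simp add: dvd_sum flip: sum_subtractf)
  from dvd_add[OF assms this] show ?thesis
    by (simp only: add_diff_eq diff_add_cancel)
qed

lemma degree_mod_power_less:
  fixes p h :: "'a::field poly"
  assumes "degree p > 0" and "e \<ge> 1"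
  shows "degree (h mod p ^ e) < e * degree p"
proof -
  have "p \<noteq> 0" using assms(1) by auto
  then have "p ^ e \<noteq> 0" and "degree (p ^ e) = e * degree p"
    by (simp_all add: degree_power_eq)
  moreover have "e * degree p > 0" using assms by simp
  ultimately show ?thesis using degree_mod_less[of "p ^ e" h] by auto
qed

theorem mainTheorem7:
  fixes p g :: "rat poly" and N :: nat and hbar :: "nat \<Rightarrow> rat poly" and \<omega> :: "nat \<Rightarrow> rat"
  assumes "irreducible p"
    and "\<not> p dvd g"
    and "\<forall>i\<in>{1..N}. degree (hbar i) < degree p"
    and "\<forall>i\<in>{1..N}. \<omega> i > 0"
    and "p dvd (g - (\<Sum>i=1..N. smult (\<omega> i) ((hbar i)^2)))"
  shows "\<forall>e::nat. e \<ge> 1 \<longrightarrow> (\<exists>h :: nat \<Rightarrow> rat poly.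
           (\<forall>i\<in>{1..N}. degree (h i) < e * degree p) \<and>
           p ^ e dvd (g - (\<Sum>i=1..N. smult (\<omega> i) ((h i)^2))))"
proof (intro allI impI)
  fix e :: nat
  assume "e \<ge> 1"
  have smult_sum: "(\<Sum>i=1..N. smult (\<omega> i) (f i ^ 2)) = (\<Sum>i=1..N. [:\<omega> i:] * f i ^ 2)" for f
    by simp
  obtain u where u: "p dvd u * g - 1"
    using irreducible_not_dvd_imp_inverse_mod[OF assms(1,2)] ..
  have two: "(2::rat poly) dvd 1"
    by (rule dvdI[of _ _ "[:1/2:]"]) (simp add: numeral_poly)
  have hbar: "p dvd g - (\<Sum>i=1..N. [:\<omega> i:] * hbar i ^ 2)"
    using assms(5) by (simp only: smult_sum)
  obtain h where "p ^ e dvd g - (\<Sum>i=1..N. [:\<omega> i:] * h i ^ 2)"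
    using weighted_squares_congruence_lifts[OF two u hbar \<open>e \<ge> 1\<close>] by blast
  then have "p ^ e dvd g - (\<Sum>i=1..N. [:\<omega> i:] * (h i mod p ^ e) ^ 2)"
    by (rule weighted_squares_congruence_mod)
  moreover have "degree p > 0"
    using assms(1) by (auto simp: irreducible_def is_unit_iff_degree)
  ultimately have "(\<forall>i\<in>{1..N}. degree (h i mod p ^ e) < e * degree p) \<and>
      p ^ e dvd g - (\<Sum>i=1..N. [:\<omega> i:] * (h i mod p ^ e) ^ 2)"
    using degree_mod_power_less \<open>e \<ge> 1\<close> by blast
  then show "\<exists>h. (\<forall>i\<in>{1..N}. degree (h i) < e * degree p) \<and>
      p ^ e dvd g - (\<Sum>i=1..N. smult (\<omega> i) (h i ^ 2))"
    unfolding smult_sum by (rule exI[of _ "\<lambda>i. h i mod p ^ e"])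
qed

end
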